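(* Let $(V,\mu)$ be an infinite, connected, locally finite weighted graph, $q>1$, $\sigma\in\ell^+(V)$, $o\in V$. If $u\ge0$ on $V$ satisfies $-\Delta u\ge\sigma u^q$ in $V$, then for every integer $R\ge1$, $$u(o)^q\sigma(o)\mu(o)\le\Big(\frac q{q-1}\Big)^{\frac q{q-1}}\Big(\sum_{y\in V}g_{B_R}(o,y)^q\sigma(y)\mu(y)\Big)^{-\frac1{q-1}},$$ where $B_R=B(o,R)$.
   Context: Weighted graph: $\mu_{xy}=\mu_{yx}\ge0$, $\mu_{xy}>0$ iff $x\sim y$, $\mu(x)=\sum_{y\sim x}\mu_{xy}$; Laplacian $\Delta u(x)=\frac1{\mu(x)}\sum_{y\sim x}\mu_{xy}(u(y)-u(x))$. $d$ is the graph distance, $B(o,R)=\{x:d(o,x)\le R\}$. For finite $U\subset V$, $g_U(x,y)=\sum_{n\ge0}\mathbb P_x[X_n=y,n<\tau_U]/\mu(y)$ for $x,y\in U$ (and $0$ otherwise), where $(X_n)$ is the random walk with $P(x,y)=\mu_{xy}/\mu(x)$ and $\tau_U$ its first exit time from $U$. *)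

theory Defs
  imports "HOL-Analysis.Analysis"
begin

definition adj :: "('a \<Rightarrow> 'a \<Rightarrow> real) \<Rightarrow> 'a \<Rightarrow> 'a \<Rightarrow> bool" where
  "adj mu x y \<longleftrightarrow> mu x y > 0"

definition nbrs :: "('a \<Rightarrow> 'a \<Rightarrow> real) \<Rightarrow> 'a \<Rightarrow> 'a set" where
  "nbrs mu x = {y. adj mu x y}"

definition weighted_graph :: "('a \<Rightarrow> 'a \<Rightarrow> real) \<Rightarrow> bool" where
  "weighted_graph mu \<longleftrightarrow> (\<forall>x y. mu x y = mu y x \<and> mu x y \<ge> 0) \<and> (\<forall>x. mu x x = 0)"

definition locally_finite :: "('a \<Rightarrow> 'a \<Rightarrow> real) \<Rightarrow> bool" where
  "locally_finite mu \<longleftrightarrow> (\<forall>x. finite (nbrs mu x))"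

definition connected_graph :: "('a \<Rightarrow> 'a \<Rightarrow> real) \<Rightarrow> bool" where
  "connected_graph mu \<longleftrightarrow> (\<forall>x y. (adj mu)\<^sup>*\<^sup>* x y)"

definition vmeas :: "('a \<Rightarrow> 'a \<Rightarrow> real) \<Rightarrow> 'a \<Rightarrow> real" where
  "vmeas mu x = (\<Sum>y\<in>nbrs mu x. mu x y)"

definition laplacian :: "('a \<Rightarrow> 'a \<Rightarrow> real) \<Rightarrow> ('a \<Rightarrow> real) \<Rightarrow> 'a \<Rightarrow> real" where
  "laplacian mu u x = (1 / vmeas mu x) * (\<Sum>y\<in>nbrs mu x. mu x y * (u y - u x))"

definition gdist :: "('a \<Rightarrow> 'a \<Rightarrow> real) \<Rightarrow> 'a \<Rightarrow> 'a \<Rightarrow> nat" where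
  "gdist mu x y = (LEAST n. (adj mu ^^ n) x y)"

definition gball :: "('a \<Rightarrow> 'a \<Rightarrow> real) \<Rightarrow> 'a \<Rightarrow> nat \<Rightarrow> 'a set" where
  "gball mu x0 R = {x. gdist mu x0 x \<le> R}"

definition trans_prob :: "('a \<Rightarrow> 'a \<Rightarrow> real) \<Rightarrow> 'a \<Rightarrow> 'a \<Rightarrow> real" where
  "trans_prob mu x y = mu x y / vmeas mu x"

text \<open>killed_prob mu U n x y = P_x[X_n = y, n < tau_U], i.e. the probability that the
  random walk started at x stays in U at times 0..n and is at y at time n
  (sum over paths in U of products of transition probabilities).\<close>
fun killed_prob :: "('a \<Rightarrow> 'a \<Rightarrow> real) \<Rightarrow> 'a set \<Rightarrow> nat \<Rightarrow> 'a \<Rightarrow> 'a \<Rightarrow> real" where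
  "killed_prob mu U 0 x y = (if x \<in> U \<and> y = x then 1 else 0)"
| "killed_prob mu U (Suc n) x y =
     (if y \<in> U then (\<Sum>z\<in>U. killed_prob mu U n x z * trans_prob mu z y) else 0)"

definition green :: "('a \<Rightarrow> 'a \<Rightarrow> real) \<Rightarrow> 'a set \<Rightarrow> 'a \<Rightarrow> 'a \<Rightarrow> real" where
  "green mu U x y = (if x \<in> U \<and> y \<in> U
      then (\<Sum>n. killed_prob mu U n x y) / vmeas mu y else 0)"

end

theory Submission
  imports Defs
begin

(* Let g = g_B(o, .) with B = B(o,R). As B is finite and the graph is infinite and connected,
   the walk killed on leaving B dies at a geometric rate, so g is finite, vanishes off B and
   satisfies sum_y mu_xy (g(x) - g(y)) = [x = o] on B. If u(o) > 0, the minimum principle gives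
   u > 0 everywhere. Test -Delta u >= sigma u^q against mu (g/u)^q on B and sum by parts; the
   edgewise inequality
     (w1^q - w2^q)(u1 - u2) <= q/(q-1) (u1 w1 - u2 w2)(w1^(q-1) - w2^(q-1)),
   a sum of two instances of Young's inequality, turns the result into q/(q-1) times the pairing
   of (g/u)^(q-1) with -Delta g, that is, into q/(q-1) (g(o)/u(o))^(q-1). The trivial bound
   g(o)^q sigma(o) mu(o) <= sum_B g^q sigma mu then eliminates g(o). *)

lemma weighted_graph_sym: "weighted_graph mu \<Longrightarrow> mu x y = mu y x"
  by (simp add: weighted_graph_def)

lemma weighted_graph_nonneg: "weighted_graph mu \<Longrightarrow> 0 \<le> mu x y"
  by (simp add: weighted_graph_def)

lemma weight_eq_0_if_not_nbr: "weighted_graph mu \<Longrightarrow> y \<notin> nbrs mu x \<Longrightarrow> mu x y = 0"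
  using weighted_graph_nonneg[of mu x y] by (auto simp: nbrs_def adj_def)

lemma finite_nbrs: "locally_finite mu \<Longrightarrow> finite (nbrs mu x)"
  by (simp add: locally_finite_def)

lemma sum_weight_eq_sum_nbrs:
  assumes "weighted_graph mu" "locally_finite mu" "finite U" "\<And>y. y \<notin> U \<Longrightarrow> f y = 0"
  shows "(\<Sum>y\<in>U. mu x y * f y) = (\<Sum>y\<in>nbrs mu x. mu x y * f y)"
proof -
  have "(\<Sum>y\<in>U. mu x y * f y) = (\<Sum>y\<in>U \<union> nbrs mu x. mu x y * f y)"
    by (rule sum.mono_neutral_left) (use assms finite_nbrs in auto)
  also have "\<dots> = (\<Sum>y\<in>nbrs mu x. mu x y * f y)"
    by (rule sum.mono_neutral_right) (use assms finite_nbrs weight_eq_0_if_not_nbr in auto)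
  finally show ?thesis .
qed

lemma vmeas_nonneg: "0 \<le> vmeas mu x"
  unfolding vmeas_def nbrs_def adj_def by (intro sum_nonneg) simp

lemma vmeas_pos_if_adj:
  assumes "locally_finite mu" "adj mu x y"
  shows "0 < vmeas mu x"
proof -
  have "mu x y \<le> vmeas mu x"
    unfolding vmeas_def
    by (rule member_le_sum) (use assms finite_nbrs in \<open>auto simp: nbrs_def adj_def\<close>)
  then show ?thesis using assms(2) by (simp add: adj_def)
qed

lemma connected_infinite_ex_adj:
  assumes "connected_graph mu" "infinite (UNIV :: 'a set)"
  shows "\<exists>y. adj mu (x :: 'a) y"
proof -
  obtain y where "y \<noteq> x"
    using assms(2) by (metis finite.emptyI finite_insert UNIV_eq_I singletonI)
  moreover have "(adj mu)\<^sup>*\<^sup>* x y"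
    using assms(1) by (simp add: connected_graph_def)
  ultimately show ?thesis by (metis converse_rtranclpE)
qed

lemma vmeas_pos:
  assumes "locally_finite mu" "connected_graph mu" "infinite (UNIV :: 'a set)"
  shows "0 < vmeas mu (x :: 'a)"
  using connected_infinite_ex_adj[OF assms(2,3)] vmeas_pos_if_adj[OF assms(1)] by blast

lemma trans_prob_nonneg: "weighted_graph mu \<Longrightarrow> 0 \<le> trans_prob mu x y"
  by (simp add: trans_prob_def weighted_graph_nonneg vmeas_nonneg)

lemma sum_trans_prob_nbrs: "0 < vmeas mu x \<Longrightarrow> (\<Sum>y\<in>nbrs mu x. trans_prob mu x y) = 1"
  by (simp add: trans_prob_def vmeas_def sum_divide_distrib[symmetric])

lemma sum_trans_prob_mult: "(\<Sum>y\<in>A. trans_prob mu x y * f y) = (\<Sum>y\<in>A. mu x y * f y) / vmeas mu x"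
  by (simp add: trans_prob_def sum_divide_distrib)

lemma finite_relpowp_adj: "locally_finite mu \<Longrightarrow> finite {y. (adj mu ^^ n) x y}"
proof (induction n)
  case 0
  then show ?case by simp
next
  case (Suc n)
  have "{y. (adj mu ^^ Suc n) x y} \<subseteq> (\<Union>z\<in>{y. (adj mu ^^ n) x y}. nbrs mu z)"
    by (auto simp: nbrs_def)
  then show ?case
    using Suc finite_nbrs by (meson finite_UN_I finite_subset)
qed

lemma relpowp_gdist: "connected_graph mu \<Longrightarrow> (adj mu ^^ gdist mu x y) x y"
  unfolding gdist_def connected_graph_def by (metis LeastI rtranclp_imp_relpowp)

lemma finite_gball:
  assumes "connected_graph mu" "locally_finite mu"
  shows "finite (gball mu x R)"
proof -
  have "gball mu x R \<subseteq> (\<Union>n\<le>R. {y. (adj mu ^^ n) x y})"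
    using relpowp_gdist[OF assms(1)] by (force simp: gball_def)
  then show ?thesis
    using finite_relpowp_adj[OF assms(2)] by (meson finite_UN_I finite_atMost finite_subset)
qed

lemma center_in_gball: "x \<in> gball mu x R"
  by (simp add: gball_def gdist_def Least_eq_0)

lemma killed_prob_nonneg: "weighted_graph mu \<Longrightarrow> 0 \<le> killed_prob mu U n x y"
  by (induction n arbitrary: y) (auto intro!: sum_nonneg simp: trans_prob_nonneg)

lemma killed_prob_outside: "y \<notin> U \<Longrightarrow> killed_prob mu U n x y = 0"
  by (cases n) auto

lemma sum_killed_prob_Suc:
  "(\<Sum>y\<in>U. killed_prob mu U (Suc n) x y * h y)
     = (\<Sum>z\<in>U. killed_prob mu U n x z * (\<Sum>y\<in>U. trans_prob mu z y * h y))"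
proof -
  have "(\<Sum>y\<in>U. killed_prob mu U (Suc n) x y * h y)
      = (\<Sum>y\<in>U. \<Sum>z\<in>U. killed_prob mu U n x z * (trans_prob mu z y * h y))"
    by (intro sum.cong) (auto simp: sum_distrib_right mult.assoc)
  also have "\<dots> = (\<Sum>z\<in>U. killed_prob mu U n x z * (\<Sum>y\<in>U. trans_prob mu z y * h y))"
    by (subst sum.swap) (simp add: sum_distrib_left)
  finally show ?thesis .
qed

text \<open>In each step the h-weighted mass of the killed walk drops by at least its total mass.\<close>
lemma summable_killed_prob_if_lyapunov:
  assumes wg: "weighted_graph mu" and fin: "finite U"
    and h_nonneg: "\<And>y. 0 \<le> h y"
    and h_lyap: "\<And>z. z \<in> U \<Longrightarrow> (\<Sum>y\<in>U. trans_prob mu z y * h y) \<le> h z - 1"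
  shows "summable (\<lambda>n. killed_prob mu U n x y)"
proof -
  define M where "M n = (\<Sum>y\<in>U. killed_prob mu U n x y * h y)" for n
  define m where "m n = (\<Sum>y\<in>U. killed_prob mu U n x y)" for n
  have M_Suc: "M (Suc n) \<le> M n - m n" for n
  proof -
    have "M (Suc n) \<le> (\<Sum>z\<in>U. killed_prob mu U n x z * (h z - 1))"
      unfolding M_def sum_killed_prob_Suc
      by (intro sum_mono mult_left_mono h_lyap killed_prob_nonneg[OF wg])
    then show ?thesis
      by (simp add: M_def m_def right_diff_distrib sum_subtractf)
  qed
  have "(\<Sum>i<n. m i) + M n \<le> M 0" for n
  proof (induction n)
    case (Suc n)
    then show ?case using M_Suc[of n] by simp
  qed simp
  moreover have "0 \<le> M n" for n
    unfolding M_def using killed_prob_nonneg[OF wg] h_nonneg by (simp add: sum_nonneg)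
  ultimately have m_bound: "(\<Sum>i<n. m i) \<le> M 0" for n
    by (smt (verit))
  have kp_le_m: "killed_prob mu U n x y \<le> m n" for n
  proof (cases "y \<in> U")
    case True
    then show ?thesis
      unfolding m_def using fin killed_prob_nonneg[OF wg] by (intro member_le_sum) auto
  next
    case False
    then show ?thesis
      unfolding m_def using killed_prob_nonneg[OF wg] by (simp add: killed_prob_outside sum_nonneg)
  qed
  show ?thesis
  proof (rule bounded_imp_summable)
    show "0 \<le> killed_prob mu U n x y" for n
      by (rule killed_prob_nonneg[OF wg])
    show "(\<Sum>k\<le>n. killed_prob mu U k x y) \<le> M 0" for n
    proof -
      have "(\<Sum>k\<le>n. killed_prob mu U k x y) \<le> (\<Sum>k<Suc n. m k)"
        unfolding lessThan_Suc_atMost by (intro sum_mono kp_le_m)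
      then show ?thesis using m_bound[of "Suc n"] by linarith
    qed
  qed
qed

lemma exit_distance_exists:
  assumes "connected_graph mu" "U \<noteq> UNIV"
  shows "\<exists>e :: 'a \<Rightarrow> nat. (\<forall>x. x \<notin> U \<longrightarrow> e x = 0) \<and> (\<forall>x\<in>U. \<exists>y. adj mu x y \<and> e y < e x)"
proof -
  obtain y0 where y0: "y0 \<notin> U" using assms(2) by blast
  define e where "e x = (LEAST n. \<exists>y. y \<notin> U \<and> (adj mu ^^ n) x y)" for x
  have reach: "\<exists>y. y \<notin> U \<and> (adj mu ^^ e x) x y" for x
  proof -
    have "(adj mu)\<^sup>*\<^sup>* x y0"
      using assms(1) by (simp add: connected_graph_def)
    then obtain n where n: "(adj mu ^^ n) x y0"
      by (metis rtranclp_imp_relpowp)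
    show ?thesis
      unfolding e_def by (rule LeastI[where k = n]) (use n y0 in auto)
  qed
  have "e x = 0" if "x \<notin> U" for x
    unfolding e_def by (rule Least_eq_0) (use that in auto)
  moreover have "\<exists>y. adj mu x y \<and> e y < e x" if "x \<in> U" for x
  proof (cases "e x")
    case 0
    then show ?thesis using reach[of x] that by auto
  next
    case (Suc m)
    obtain y where y: "y \<notin> U" "(adj mu ^^ Suc m) x y"
      using reach[of x] Suc by auto
    obtain z where z: "adj mu x z" "(adj mu ^^ m) z y"
      using relpowp_Suc_D2[OF y(2)] by blast
    have "e z \<le> m"
      unfolding e_def by (rule Least_le) (use y z in blast)
    then show ?thesis using z(1) Suc by auto
  qed
  ultimately show ?thesis by blast
qed

lemma trans_prob_lower_bound:
  assumes "locally_finite mu" "finite U" "\<And>x. 0 < vmeas mu x"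
  shows "\<exists>p. 0 < p \<and> p < 1 \<and> (\<forall>x\<in>U. \<forall>y\<in>nbrs mu x. p \<le> trans_prob mu x y)"
proof -
  define S where "S = insert (1/2) (\<Union>x\<in>U. trans_prob mu x ` nbrs mu x)"
  have fin: "finite S"
    unfolding S_def using assms(1,2) by (simp add: finite_nbrs)
  have "0 < Min S"
    using fin assms(3) by (auto simp: Min_gr_iff S_def trans_prob_def nbrs_def adj_def)
  moreover have "Min S < 1"
    using Min_le[OF fin, of "1/2"] by (simp add: S_def)
  moreover have "Min S \<le> trans_prob mu x y" if "x \<in> U" "y \<in> nbrs mu x" for x y
    by (rule Min_le[OF fin]) (use that in \<open>auto simp: S_def\<close>)
  ultimately show ?thesis by blast
qed

lemma sum_trans_prob_le_split:
  assumes "weighted_graph mu" "locally_finite mu" "0 < vmeas mu x" "y1 \<in> nbrs mu x"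
    and "h y1 \<le> c" "\<And>y. h y \<le> M"
  shows "(\<Sum>y\<in>nbrs mu x. trans_prob mu x y * h y)
    \<le> trans_prob mu x y1 * c + (1 - trans_prob mu x y1) * M"
proof -
  have fin: "finite (nbrs mu x)"
    by (rule finite_nbrs[OF assms(2)])
  have "(\<Sum>y\<in>nbrs mu x. trans_prob mu x y * h y)
      = trans_prob mu x y1 * h y1 + (\<Sum>y\<in>nbrs mu x - {y1}. trans_prob mu x y * h y)"
    by (rule sum.remove[OF fin assms(4)])
  also have "\<dots> \<le> trans_prob mu x y1 * c + (\<Sum>y\<in>nbrs mu x - {y1}. trans_prob mu x y * M)"
    using assms(1,5,6) trans_prob_nonneg by (intro add_mono mult_left_mono sum_mono) auto
  also have "(\<Sum>y\<in>nbrs mu x - {y1}. trans_prob mu x y * M) = (1 - trans_prob mu x y1) * M"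
    using sum.remove[OF fin assms(4), of "trans_prob mu x"] sum_trans_prob_nbrs[OF assms(3)]
    by (simp add: sum_distrib_right[symmetric])
  finally show ?thesis .
qed

text \<open>The Lyapunov function is K (1 - p^e), where e is the graph distance to the complement of
  U and p bounds the transition probabilities from below: one step towards the complement
  (probability at least p) gains enough to pay for the worst case of all other steps.\<close>
lemma lyapunov_exists:
  assumes wg: "weighted_graph mu" and lf: "locally_finite mu" and conn: "connected_graph mu"
    and vpos: "\<And>x. 0 < vmeas mu x" and fin: "finite U" and "U \<noteq> UNIV"
  shows "\<exists>h. (\<forall>y. 0 \<le> h y) \<and> (\<forall>z\<in>U. (\<Sum>y\<in>U. trans_prob mu z y * h y) \<le> h z - 1)"
proof -
  obtain e :: "'a \<Rightarrow> nat" where e_out: "\<And>x. x \<notin> U \<Longrightarrow> e x = 0"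
    and e_desc: "\<And>x. x \<in> U \<Longrightarrow> \<exists>y. adj mu x y \<and> e y < e x"
    using exit_distance_exists[OF conn \<open>U \<noteq> UNIV\<close>] by blast
  obtain p where p: "0 < p" "p < 1"
    and p_le: "\<And>x y. x \<in> U \<Longrightarrow> y \<in> nbrs mu x \<Longrightarrow> p \<le> trans_prob mu x y"
    using trans_prob_lower_bound[OF lf fin vpos] by blast
  define E where "E = Max (insert 0 (e ` U))"
  have e_le: "e x \<le> E" for x
    using e_out fin by (cases "x \<in> U") (auto simp: E_def)
  define K where "K = 1 / ((1 - p) * p ^ E)"
  define h where "h x = K * (1 - p ^ e x)" for x
  have K: "0 < K" "K * (1 - p) * p ^ E = 1"
    using p by (auto simp: K_def)
  have h_le: "h x \<le> K * (1 - p ^ n)" if "e x \<le> n" for x n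
    using that p K by (auto simp: h_def intro!: mult_left_mono power_decreasing)
  have h_nonneg: "0 \<le> h x" for x
    using p K by (simp add: h_def power_le_one)
  have "(\<Sum>y\<in>U. trans_prob mu z y * h y) \<le> h z - 1" if z: "z \<in> U" for z
  proof -
    obtain y1 where y1: "y1 \<in> nbrs mu z" "e y1 < e z"
      using e_desc[OF z] by (auto simp: nbrs_def)
    define t a b where "t = trans_prob mu z y1" and "a = p ^ (e z - 1)" and "b = p ^ E"
    have "p \<le> t" "b \<le> a"
      using p_le[OF z y1(1)] p e_le[of z] by (auto simp: t_def a_def b_def intro: power_decreasing)
    then have gain: "0 \<le> K * ((t - p) * (a - b))"
      using K by simp
    have "(\<Sum>y\<in>U. trans_prob mu z y * h y) = (\<Sum>y\<in>nbrs mu z. trans_prob mu z y * h y)"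
      using sum_weight_eq_sum_nbrs[OF wg lf fin, of h z] e_out
      by (simp add: sum_trans_prob_mult h_def)
    also have "\<dots> \<le> t * (K * (1 - a)) + (1 - t) * (K * (1 - b))"
      unfolding t_def a_def b_def
      by (rule sum_trans_prob_le_split[OF wg lf vpos y1(1)]) (use h_le e_le y1(2) in auto)
    also have "\<dots> = K * (1 - p * a) - K * (1 - p) * b - K * ((t - p) * (a - b))"
      by (simp add: algebra_simps)
    also have "\<dots> \<le> K * (1 - p ^ e z) - 1"
      using gain K(2) y1(2) by (simp add: a_def b_def power_Suc[symmetric])
    finally show ?thesis
      by (simp add: h_def)
  qed
  then show ?thesis
    using h_nonneg by blast
qed

lemma summable_killed_prob:
  assumes "weighted_graph mu" "locally_finite mu" "connected_graph mu"
    and "infinite (UNIV :: 'a set)" "finite (U :: 'a set)"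
  shows "summable (\<lambda>n. killed_prob mu U n x y)"
proof -
  have "U \<noteq> UNIV"
    using assms(4,5) by auto
  then obtain h where "\<forall>y. 0 \<le> h y" "\<forall>z\<in>U. (\<Sum>y\<in>U. trans_prob mu z y * h y) \<le> h z - 1"
    using lyapunov_exists[OF assms(1-3) vmeas_pos[OF assms(2-4)] assms(5)] by blast
  then show ?thesis
    using summable_killed_prob_if_lyapunov[OF assms(1,5)] by blast
qed

lemma suminf_killed_prob_eq:
  assumes "y \<in> U" and sm: "\<And>z. summable (\<lambda>n. killed_prob mu U n x z)"
  shows "(\<Sum>n. killed_prob mu U n x y)
    = (if x \<in> U \<and> y = x then 1 else 0) + (\<Sum>z\<in>U. (\<Sum>n. killed_prob mu U n x z) * trans_prob mu z y)"
proof -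
  have "(\<Sum>n. killed_prob mu U n x y) - killed_prob mu U 0 x y = (\<Sum>n. killed_prob mu U (Suc n) x y)"
    by (rule suminf_split_head[OF sm, symmetric])
  also have "\<dots> = (\<Sum>n. \<Sum>z\<in>U. killed_prob mu U n x z * trans_prob mu z y)"
    using assms(1) by simp
  also have "\<dots> = (\<Sum>z\<in>U. (\<Sum>n. killed_prob mu U n x z) * trans_prob mu z y)"
    using sm by (simp add: suminf_sum summable_mult2 suminf_mult2)
  finally show ?thesis
    by simp
qed

lemma green_nonneg:
  assumes "weighted_graph mu" "locally_finite mu" "connected_graph mu"
    and "infinite (UNIV :: 'a set)" "finite (U :: 'a set)"
  shows "0 \<le> green mu U x y"
  using summable_killed_prob[OF assms] killed_prob_nonneg[OF assms(1)]
  by (simp add: green_def suminf_nonneg vmeas_nonneg)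

lemma green_equation:
  assumes wg: "weighted_graph mu" and lf: "locally_finite mu" and vpos: "\<And>x. 0 < vmeas mu x"
    and fin: "finite U" and x0: "x0 \<in> U" and x: "x \<in> U"
    and sm: "\<And>z. summable (\<lambda>n. killed_prob mu U n x0 z)"
  shows "(\<Sum>y\<in>nbrs mu x. mu x y * (green mu U x0 x - green mu U x0 y)) = (if x = x0 then 1 else 0)"
proof -
  let ?g = "green mu U x0"
  have suminf_eq: "(\<Sum>n. killed_prob mu U n x0 z) = vmeas mu z * ?g z" if "z \<in> U" for z
    using that x0 vpos[of z] by (simp add: green_def)
  have "vmeas mu x * ?g x = (if x = x0 then 1 else 0) + (\<Sum>z\<in>U. vmeas mu z * ?g z * trans_prob mu z x)"
    using suminf_killed_prob_eq[OF x sm] x0 x by (simp add: suminf_eq cong: sum.cong)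
  also have "(\<Sum>z\<in>U. vmeas mu z * ?g z * trans_prob mu z x) = (\<Sum>z\<in>U. mu x z * ?g z)"
  proof (rule sum.cong[OF refl])
    show "vmeas mu z * ?g z * trans_prob mu z x = mu x z * ?g z" for z
      using vpos[of z] weighted_graph_sym[OF wg, of z x] by (simp add: trans_prob_def)
  qed
  also have "\<dots> = (\<Sum>z\<in>nbrs mu x. mu x z * ?g z)"
    by (rule sum_weight_eq_sum_nbrs[OF wg lf fin]) (simp add: green_def)
  finally have "vmeas mu x * ?g x = (if x = x0 then 1 else 0) + (\<Sum>z\<in>nbrs mu x. mu x z * ?g z)" .
  moreover have "(\<Sum>y\<in>nbrs mu x. mu x y * (?g x - ?g y))
      = vmeas mu x * ?g x - (\<Sum>y\<in>nbrs mu x. mu x y * ?g y)"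
    by (simp add: vmeas_def right_diff_distrib sum_subtractf sum_distrib_right)
  ultimately show ?thesis
    by simp
qed

lemma vmeas_mult_neg_laplacian:
  "0 < vmeas mu x \<Longrightarrow> vmeas mu x * - laplacian mu u x = (\<Sum>y\<in>nbrs mu x. mu x y * (u x - u y))"
  by (simp add: laplacian_def sum_negf[symmetric] algebra_simps)

lemma superharmonic_pos:
  assumes wg: "weighted_graph mu" and lf: "locally_finite mu" and conn: "connected_graph mu"
    and vpos: "\<And>x. 0 < vmeas mu x"
    and u_nonneg: "\<And>x. 0 \<le> u x" and super: "\<And>x. laplacian mu u x \<le> 0" and "0 < u x0"
  shows "0 < u x"
proof -
  have "(adj mu)\<^sup>*\<^sup>* x0 x"
    using conn by (simp add: connected_graph_def)
  then show ?thesis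
  proof (induction rule: rtranclp_induct)
    case base
    show ?case by fact
  next
    case (step y z)
    show "0 < u z"
    proof (rule ccontr)
      assume "\<not> 0 < u z"
      then have "u z = 0"
        using u_nonneg[of z] by simp
      have y: "y \<in> nbrs mu z"
        using step(2) weighted_graph_sym[OF wg, of y z] by (simp add: nbrs_def adj_def)
      then have "0 < mu z y * u y"
        using step(3) by (simp add: nbrs_def adj_def)
      also have "\<dots> \<le> (\<Sum>v\<in>nbrs mu z. mu z v * u v)"
        by (rule member_le_sum) (use y lf finite_nbrs u_nonneg weighted_graph_nonneg[OF wg] in auto)
      also have "\<dots> = vmeas mu z * laplacian mu u z"
        using vmeas_mult_neg_laplacian[OF vpos[of z], of u] \<open>u z = 0\<close> by (simp add: sum_negf)
      also have "\<dots> \<le> 0"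
        using vpos[of z] super[of z] by (simp add: mult_nonneg_nonpos less_imp_le)
      finally show False by simp
    qed
  qed
qed

lemma summation_by_parts:
  assumes wg: "weighted_graph mu" and fin: "finite N" and "B \<subseteq> N"
    and N_nbrs: "\<And>x. x \<in> B \<Longrightarrow> nbrs mu x \<subseteq> N" and f_out: "\<And>x. x \<notin> B \<Longrightarrow> f x = 0"
  shows "(\<Sum>x\<in>N. \<Sum>y\<in>N. mu x y * ((f x - f y) * (g x - g y)))
       = 2 * (\<Sum>x\<in>B. f x * (\<Sum>y\<in>nbrs mu x. mu x y * (g x - g y)))"
proof -
  define A where "A = (\<Sum>x\<in>N. \<Sum>y\<in>N. mu x y * (f x * (g x - g y)))"
  have "(\<Sum>x\<in>N. \<Sum>y\<in>N. mu x y * ((f x - f y) * (g x - g y)))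
      = A - (\<Sum>x\<in>N. \<Sum>y\<in>N. mu x y * (f y * (g x - g y)))"
    unfolding A_def sum_subtractf[symmetric] by (simp add: algebra_simps)
  also have "(\<Sum>x\<in>N. \<Sum>y\<in>N. mu x y * (f y * (g x - g y)))
      = (\<Sum>y\<in>N. \<Sum>x\<in>N. mu y x * (f y * (g x - g y)))"
    using weighted_graph_sym[OF wg] by (subst sum.swap) simp
  also have "\<dots> = - A"
    unfolding A_def by (simp add: sum_negf[symmetric] algebra_simps)
  finally have "(\<Sum>x\<in>N. \<Sum>y\<in>N. mu x y * ((f x - f y) * (g x - g y))) = 2 * A"
    by simp
  also have "A = (\<Sum>x\<in>N. f x * (\<Sum>y\<in>N. mu x y * (g x - g y)))"
    unfolding A_def by (simp add: sum_distrib_left algebra_simps)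
  also have "\<dots> = (\<Sum>x\<in>B. f x * (\<Sum>y\<in>N. mu x y * (g x - g y)))"
    by (rule sum.mono_neutral_right[OF fin \<open>B \<subseteq> N\<close>]) (use f_out in auto)
  also have "\<dots> = (\<Sum>x\<in>B. f x * (\<Sum>y\<in>nbrs mu x. mu x y * (g x - g y)))"
    using N_nbrs weight_eq_0_if_not_nbr[OF wg]
    by (intro sum.cong refl arg_cong2[where f = "(*)"] sum.mono_neutral_right fin) auto
  finally show ?thesis .
qed

lemma young_powr:
  fixes q x y :: real
  assumes q: "1 < q" and "0 \<le> x" "0 \<le> y"
  shows "q * (x * y powr (q - 1)) \<le> x powr q + (q - 1) * y powr q"
proof -
  have "x * y powr (q - 1) \<le> x powr q / q + (y powr (q - 1)) powr (q / (q - 1)) / (q / (q - 1))"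
    by (rule Youngs_inequality) (use assms in \<open>auto simp: field_simps\<close>)
  also have "(y powr (q - 1)) powr (q / (q - 1)) = y powr q"
    using q by (simp add: powr_powr)
  finally show ?thesis
    using q by (simp add: field_simps)
qed

lemma picone_powr:
  fixes q u1 u2 w1 w2 :: real
  assumes q: "1 < q" and u: "0 \<le> u1" "0 \<le> u2" and w: "0 \<le> w1" "0 \<le> w2"
  shows "(w1 powr q - w2 powr q) * (u1 - u2)
    \<le> q / (q - 1) * ((u1 * w1 - u2 * w2) * (w1 powr (q - 1) - w2 powr (q - 1)))"
proof -
  define r1 r2 where "r1 = w1 powr (q - 1)" and "r2 = w2 powr (q - 1)"
  have t1: "w1 powr q = w1 * r1" and t2: "w2 powr q = w2 * r2"
    using powr_mult_base[OF w(1), of "q - 1"] powr_mult_base[OF w(2), of "q - 1"]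
    by (simp_all add: r1_def r2_def)
  have young1: "q * (w1 * r2) \<le> w1 * r1 + (q - 1) * (w2 * r2)"
    using young_powr[OF q w] t1 t2 by (simp add: r2_def)
  have young2: "q * (w2 * r1) \<le> w2 * r2 + (q - 1) * (w1 * r1)"
    using young_powr[OF q w(2) w(1)] t1 t2 by (simp add: r1_def)
  have "(q - 1) * ((w1 powr q - w2 powr q) * (u1 - u2))
      = q * ((u1 * w1 - u2 * w2) * (r1 - r2))
        - u1 * (w1 * r1 + (q - 1) * (w2 * r2) - q * (w1 * r2))
        - u2 * (w2 * r2 + (q - 1) * (w1 * r1) - q * (w2 * r1))"
    unfolding t1 t2 by (simp add: algebra_simps)
  also have "\<dots> \<le> q * ((u1 * w1 - u2 * w2) * (r1 - r2))"
  proof -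
    have "0 \<le> u1 * (w1 * r1 + (q - 1) * (w2 * r2) - q * (w1 * r2))"
      using young1 u(1) by simp
    moreover have "0 \<le> u2 * (w2 * r2 + (q - 1) * (w1 * r1) - q * (w2 * r1))"
      using young2 u(2) by simp
    ultimately show ?thesis by linarith
  qed
  finally show ?thesis
    using q by (simp add: r1_def r2_def field_simps)
qed

lemma power_sum_le_by_picone:
  fixes q :: real
  assumes wg: "weighted_graph mu" and lf: "locally_finite mu" and vpos: "\<And>x. 0 < vmeas mu x"
    and q: "1 < q" and fin: "finite B" and x0: "x0 \<in> B"
    and a_nonneg: "\<And>x. 0 \<le> a x" and a_out: "\<And>x. x \<notin> B \<Longrightarrow> a x = 0"
    and a_eq: "\<And>x. x \<in> B \<Longrightarrow> (\<Sum>y\<in>nbrs mu x. mu x y * (a x - a y)) = (if x = x0 then 1 else 0)"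
    and u_pos: "\<And>x. 0 < u x" and super: "\<And>x. \<sigma> x * u x powr q \<le> - laplacian mu u x"
  shows "(\<Sum>x\<in>B. a x powr q * \<sigma> x * vmeas mu x) \<le> q / (q - 1) * (a x0 / u x0) powr (q - 1)"
proof -
  define w where "w x = a x / u x" for x
  define N where "N = B \<union> (\<Union>x\<in>B. nbrs mu x)"
  have N: "finite N" "B \<subseteq> N" "\<And>x. x \<in> B \<Longrightarrow> nbrs mu x \<subseteq> N"
    using fin lf by (auto simp: N_def finite_nbrs)
  have w_nonneg: "0 \<le> w x" for x
    using a_nonneg[of x] u_pos[of x] by (simp add: w_def)
  have a_eq_uw: "a x = u x * w x" for x
    using u_pos[of x] by (simp add: w_def)
  have edge: "(w x powr q - w y powr q) * (u x - u y)
      \<le> q / (q - 1) * ((a x - a y) * (w x powr (q - 1) - w y powr (q - 1)))" for x y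
    using picone_powr[OF q, of "u x" "u y" "w x" "w y"] u_pos[of x] u_pos[of y] w_nonneg
    by (simp add: a_eq_uw less_imp_le)
  have "(\<Sum>x\<in>B. a x powr q * \<sigma> x * vmeas mu x)
      \<le> (\<Sum>x\<in>B. w x powr q * (\<Sum>y\<in>nbrs mu x. mu x y * (u x - u y)))"
  proof (rule sum_mono)
    fix x
    have "a x powr q * \<sigma> x * vmeas mu x = w x powr q * (vmeas mu x * (\<sigma> x * u x powr q))"
      using u_pos[of x] w_nonneg[of x] by (simp add: a_eq_uw powr_mult)
    also have "\<dots> \<le> w x powr q * (vmeas mu x * - laplacian mu u x)"
      using super[of x] vpos[of x] by (intro mult_left_mono) auto
    also have "\<dots> = w x powr q * (\<Sum>y\<in>nbrs mu x. mu x y * (u x - u y))"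
      by (simp only: vmeas_mult_neg_laplacian[OF vpos])
    finally show "a x powr q * \<sigma> x * vmeas mu x
        \<le> w x powr q * (\<Sum>y\<in>nbrs mu x. mu x y * (u x - u y))" .
  qed
  also have "\<dots> = (\<Sum>x\<in>N. \<Sum>y\<in>N. mu x y * ((w x powr q - w y powr q) * (u x - u y))) / 2"
    using summation_by_parts[OF wg N, of "\<lambda>x. w x powr q" u] by (simp add: w_def a_out)
  also have "\<dots> \<le> (\<Sum>x\<in>N. \<Sum>y\<in>N. mu x y
      * (q / (q - 1) * ((a x - a y) * (w x powr (q - 1) - w y powr (q - 1))))) / 2"
    by (intro divide_right_mono sum_mono mult_left_mono edge weighted_graph_nonneg[OF wg]) simp
  also have "\<dots> = q / (q - 1)
      * ((\<Sum>x\<in>N. \<Sum>y\<in>N. mu x y * ((w x powr (q - 1) - w y powr (q - 1)) * (a x - a y))) / 2)"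
    by (simp add: sum_distrib_left algebra_simps)
  also have "\<dots> = q / (q - 1) * (\<Sum>x\<in>B. w x powr (q - 1) * (\<Sum>y\<in>nbrs mu x. mu x y * (a x - a y)))"
    using summation_by_parts[OF wg N, of "\<lambda>x. w x powr (q - 1)" a] by (simp add: w_def a_out)
  also have "(\<Sum>x\<in>B. w x powr (q - 1) * (\<Sum>y\<in>nbrs mu x. mu x y * (a x - a y)))
      = (\<Sum>x\<in>B. if x = x0 then w x powr (q - 1) else 0)"
    by (rule sum.cong) (simp_all add: a_eq)
  also have "\<dots> = w x0 powr (q - 1)"
    using fin x0 by simp
  finally show ?thesis
    by (simp add: w_def)
qed

text \<open>Eliminates a, which stands for g(x0), between an upper and a lower bound for T.\<close>
lemma powr_bound_eliminate:
  fixes q v a T s :: real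
  assumes q: "1 < q" and v: "0 < v" and a: "0 \<le> a" and T: "0 < T"
    and upper: "T \<le> q / (q - 1) * (a / v) powr (q - 1)" and lower: "a powr q * s \<le> T"
  shows "v powr q * s \<le> (q / (q - 1)) powr (q / (q - 1)) * T powr (- 1 / (q - 1))"
proof -
  define K where "K = q / (q - 1)"
  have K: "0 < K"
    using q by (simp add: K_def)
  have "a \<noteq> 0"
    using upper T by auto
  then have a_pos: "0 < a"
    using a by simp
  define X where "X = v / a"
  have X: "0 < X"
    using v a_pos by (simp add: X_def)
  have "(a / v) powr (q - 1) * X powr (q - 1) = 1"
    using v a_pos X by (simp add: X_def powr_mult[symmetric])
  then have "T * X powr (q - 1) \<le> K"
    using mult_right_mono[OF upper, of "X powr (q - 1)"] by (simp add: K_def mult.assoc)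
  then have "X powr (q - 1) \<le> K / T"
    using T by (simp add: field_simps)
  then have Xq: "X powr q \<le> (K / T) powr (q / (q - 1))"
    using q X powr_mono2[of "q / (q - 1)" "X powr (q - 1)" "K / T"] by (simp add: powr_powr)
  have "v powr q * s = X powr q * (a powr q * s)"
    using v a_pos by (simp add: X_def powr_divide)
  also have "\<dots> \<le> X powr q * T"
    using lower by (simp add: mult_left_mono)
  also have "\<dots> \<le> (K / T) powr (q / (q - 1)) * T"
    using Xq T by (simp add: mult_right_mono)
  also have "\<dots> = K powr (q / (q - 1)) * T powr (1 - q / (q - 1))"
    using K T by (simp add: powr_divide powr_diff)
  also have "1 - q / (q - 1) = - 1 / (q - 1)"
    using q by (simp add: field_simps)
  finally show ?thesis
    by (simp add: K_def)
qed

lemma green_power_sum_le: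
  fixes q :: real
  assumes wg: "weighted_graph mu" and lf: "locally_finite mu" and conn: "connected_graph mu"
    and inf: "infinite (UNIV :: 'a set)" and q: "1 < q" and fin: "finite (U :: 'a set)"
    and x0: "x0 \<in> U"
    and u_pos: "\<And>x. 0 < u x" and super: "\<And>x. \<sigma> x * u x powr q \<le> - laplacian mu u x"
  shows "(\<Sum>y\<in>U. green mu U x0 y powr q * \<sigma> y * vmeas mu y)
    \<le> q / (q - 1) * (green mu U x0 x0 / u x0) powr (q - 1)"
proof -
  have vpos: "\<And>x. 0 < vmeas mu x"
    by (rule vmeas_pos[OF lf conn inf])
  have sm: "\<And>y. summable (\<lambda>n. killed_prob mu U n x0 y)"
    by (rule summable_killed_prob[OF wg lf conn inf fin])
  show ?thesis
    by (rule power_sum_le_by_picone[OF wg lf vpos q fin x0 green_nonneg[OF wg lf conn inf fin]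
          _ _ u_pos super])
      (use green_equation[OF wg lf vpos fin x0 _ sm] in \<open>auto simp: green_def\<close>)
qed

theorem lemma4p2:
  fixes mu :: "'a \<Rightarrow> 'a \<Rightarrow> real" and u \<sigma> :: "'a \<Rightarrow> real" and q :: real
    and x0 :: 'a and R :: nat
  assumes "weighted_graph mu" and "infinite (UNIV :: 'a set)"
    and "connected_graph mu" and "locally_finite mu"
    and "q > 1"
    and "\<And>x. \<sigma> x \<ge> 0"
    and "\<And>x. u x \<ge> 0"
    and "\<And>x. - laplacian mu u x \<ge> \<sigma> x * u x powr q"
    and "R \<ge> 1"
  shows "(\<Sum>y\<in>gball mu x0 R. green mu (gball mu x0 R) x0 y powr q * \<sigma> y * vmeas mu y) > 0 \<longrightarrow>
     u x0 powr q * \<sigma> x0 * vmeas mu x0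
      \<le> (q / (q - 1)) powr (q / (q - 1))
         * (\<Sum>y\<in>gball mu x0 R. green mu (gball mu x0 R) x0 y powr q * \<sigma> y * vmeas mu y)
             powr (- 1 / (q - 1))"
proof -
  note wg = assms(1) and inf = assms(2) and conn = assms(3) and lf = assms(4) and q = assms(5)
  define B where "B = gball mu x0 R"
  define T where "T = (\<Sum>y\<in>B. green mu B x0 y powr q * \<sigma> y * vmeas mu y)"
  have fin: "finite B" and x0: "x0 \<in> B"
    unfolding B_def by (rule finite_gball[OF conn lf], rule center_in_gball)
  have "u x0 powr q * (\<sigma> x0 * vmeas mu x0)
      \<le> (q / (q - 1)) powr (q / (q - 1)) * T powr (- 1 / (q - 1))"
    if "0 < T" "u x0 \<noteq> 0"
  proof -
    have "laplacian mu u x \<le> 0" for x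
      using assms(8)[of x] mult_nonneg_nonneg[OF assms(6)[of x] powr_ge_zero[of "u x" q]] by linarith
    moreover have "0 < u x0"
      using assms(7)[of x0] that(2) by simp
    ultimately have u_pos: "0 < u x" for x
      by (rule superharmonic_pos[OF wg lf conn vmeas_pos[OF lf conn inf] assms(7)])
    have "T \<le> q / (q - 1) * (green mu B x0 x0 / u x0) powr (q - 1)"
      unfolding T_def by (rule green_power_sum_le[OF wg lf conn inf q fin x0 u_pos assms(8)])
    moreover have "green mu B x0 x0 powr q * (\<sigma> x0 * vmeas mu x0) \<le> T"
      unfolding T_def mult.assoc[symmetric] using fin x0 assms(6)
      by (intro member_le_sum) (auto intro!: mult_nonneg_nonneg simp: vmeas_nonneg)
    ultimately show ?thesis
      by (rule powr_bound_eliminate[OF q u_pos green_nonneg[OF wg lf conn inf fin] that(1)])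
  qed
  then show ?thesis
    unfolding T_def B_def by (cases "u x0 = 0") (auto simp: mult.assoc)
qed

end
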